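(* Let $(A,\leq,\cdot,/)$ be a right-residuated magma satisfying condition (N). Then: (1) for every $x\in A$, $x/x$ is a maximal element of $(A,\leq)$; (2) $((x/x)y)/y = x/x$ for all $x,y\in A$; (3) if $(A,\leq)$ has a top element, then $x/x$ equals this top element for every $x\in A$.
   Context: Write $xy$ for $x\cdot y$; $\cdot$ binds more strongly than $/$, and $/$ binds more strongly than $\sqcap$, where $x\sqcap y := (x/y)y$. A right-residuated magma is a structure $(A,\leq,\cdot,/)$ where $(A,\leq)$ is a poset and $xy\leq z\iff x\leq z/y$ for all $x,y,z\in A$. Condition (N): for all $x,y\in A$, $x\leq y\iff x = y\sqcap x$. *)

theory Defs
  imports Main
begin

definition right_residuated_magma ::
  "('a \<Rightarrow> 'a \<Rightarrow> bool) \<Rightarrow> ('a \<Rightarrow> 'a \<Rightarrow> 'a) \<Rightarrow> ('a \<Rightarrow> 'a \<Rightarrow> 'a) \<Rightarrow> bool" where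
  "right_residuated_magma le mult rdiv \<longleftrightarrow>
     partial_order_on UNIV {(x, y). le x y} \<and>
     (\<forall>x y z. le (mult x y) z \<longleftrightarrow> le x (rdiv z y))"

definition rmeet :: "('a \<Rightarrow> 'a \<Rightarrow> 'a) \<Rightarrow> ('a \<Rightarrow> 'a \<Rightarrow> 'a) \<Rightarrow> 'a \<Rightarrow> 'a \<Rightarrow> 'a" where
  "rmeet mult rdiv x y = mult (rdiv x y) y"

definition condition_N ::
  "('a \<Rightarrow> 'a \<Rightarrow> bool) \<Rightarrow> ('a \<Rightarrow> 'a \<Rightarrow> 'a) \<Rightarrow> ('a \<Rightarrow> 'a \<Rightarrow> 'a) \<Rightarrow> bool" where
  "condition_N le mult rdiv \<longleftrightarrow> (\<forall>x y. le x y \<longleftrightarrow> x = rmeet mult rdiv y x)"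

definition is_maximal :: "('a \<Rightarrow> 'a \<Rightarrow> bool) \<Rightarrow> 'a \<Rightarrow> bool" where
  "is_maximal le m \<longleftrightarrow> (\<forall>z. le m z \<longrightarrow> z = m)"

definition is_top :: "('a \<Rightarrow> 'a \<Rightarrow> bool) \<Rightarrow> 'a \<Rightarrow> bool" where
  "is_top le t \<longleftrightarrow> (\<forall>z. le z t)"

end

theory Submission
  imports Defs
begin

text \<open>Multiplication on the right is monotone in its left argument, and condition (N) gives
  \<open>(x/x)x = x\<close>. If \<open>x \<le> zx\<close>, then (N) yields \<open>x = (zx/x)x\<close>, while \<open>z \<le> zx/x\<close> by
  residuation, so \<open>zx \<le> (zx/x)x = x\<close> and hence \<open>zx = x\<close>. Now \<open>x/x \<le> z\<close> gives
  \<open>x = (x/x)x \<le> zx\<close>, so \<open>zx = x\<close>, i.e. \<open>z \<le> x/x\<close>: thus \<open>x/x\<close> is maximal. Since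
  \<open>x/x \<le> ((x/x)y)/y\<close> and \<open>x/x \<le> t\<close> for a top \<open>t\<close>, both remaining claims follow.\<close>

locale right_residuated =
  fixes le :: "'a \<Rightarrow> 'a \<Rightarrow> bool" (infix \<open>\<preceq>\<close> 50)
    and mult :: "'a \<Rightarrow> 'a \<Rightarrow> 'a" (infixl \<open>\<cdot>\<close> 71)
    and rdiv :: "'a \<Rightarrow> 'a \<Rightarrow> 'a" (infixl \<open>\<oslash>\<close> 70)
  assumes right_residuated_magma: "right_residuated_magma le mult rdiv"
begin

lemma residuation: "x \<cdot> y \<preceq> z \<longleftrightarrow> x \<preceq> z \<oslash> y"
  using right_residuated_magma unfolding right_residuated_magma_def by blast

lemma le_refl: "x \<preceq> x"
  using right_residuated_magma
  unfolding right_residuated_magma_def partial_order_on_def preorder_on_def refl_on_def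
  by blast

lemma le_antisym: "x \<preceq> y \<Longrightarrow> y \<preceq> x \<Longrightarrow> x = y"
  using right_residuated_magma
  unfolding right_residuated_magma_def partial_order_on_def antisym_def
  by blast

lemma le_trans: "x \<preceq> y \<Longrightarrow> y \<preceq> z \<Longrightarrow> x \<preceq> z"
  using right_residuated_magma
  unfolding right_residuated_magma_def partial_order_on_def preorder_on_def trans_def
  by blast

lemma le_mult_rdiv: "x \<preceq> x \<cdot> y \<oslash> y"
  using residuation le_refl by blast

lemma mult_left_mono:
  assumes "x \<preceq> y"
  shows "x \<cdot> z \<preceq> y \<cdot> z"
  using residuation le_trans[OF assms le_mult_rdiv] by blast

end

locale right_residuated_N = right_residuated +
  assumes condition_N: "condition_N le mult rdiv"
begin

lemma le_iff_rmeet: "x \<preceq> y \<longleftrightarrow> x = (y \<oslash> x) \<cdot> x"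
  using condition_N unfolding condition_N_def rmeet_def by blast

lemma rdiv_self_mult: "(x \<oslash> x) \<cdot> x = x"
  using le_iff_rmeet le_refl by metis

lemma le_mult_imp_eq:
  assumes "x \<preceq> z \<cdot> x"
  shows "z \<cdot> x = x"
proof -
  have "x = (z \<cdot> x \<oslash> x) \<cdot> x"
    using assms le_iff_rmeet by blast
  moreover have "z \<cdot> x \<preceq> (z \<cdot> x \<oslash> x) \<cdot> x"
    using mult_left_mono le_mult_rdiv by blast
  ultimately show ?thesis
    using assms le_antisym by simp
qed

lemma rdiv_self_le_imp_eq:
  assumes "x \<oslash> x \<preceq> z"
  shows "z = x \<oslash> x"
proof -
  have "x \<preceq> z \<cdot> x"
    using mult_left_mono[OF assms, of x] rdiv_self_mult by simp
  then have "z \<preceq> x \<oslash> x"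
    using le_mult_imp_eq residuation le_refl by metis
  then show ?thesis
    using assms le_antisym by blast
qed

lemma is_maximal_rdiv_self: "is_maximal le (x \<oslash> x)"
  unfolding is_maximal_def using rdiv_self_le_imp_eq by blast

lemma rdiv_self_mult_rdiv: "(x \<oslash> x) \<cdot> y \<oslash> y = x \<oslash> x"
  using rdiv_self_le_imp_eq le_mult_rdiv by blast

lemma rdiv_self_eq_top: "is_top le t \<Longrightarrow> x \<oslash> x = t"
  unfolding is_top_def using rdiv_self_le_imp_eq by metis

end

theorem mainTheorem6:
  fixes le :: "'a \<Rightarrow> 'a \<Rightarrow> bool" and mult rdiv :: "'a \<Rightarrow> 'a \<Rightarrow> 'a"
  assumes "right_residuated_magma le mult rdiv"
    and "condition_N le mult rdiv"
  shows "(\<forall>x. is_maximal le (rdiv x x))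
       \<and> (\<forall>x y. rdiv (mult (rdiv x x) y) y = rdiv x x)
       \<and> (\<forall>t. is_top le t \<longrightarrow> (\<forall>x. rdiv x x = t))"
proof -
  interpret right_residuated_N le mult rdiv
    using assms by unfold_locales
  show ?thesis
    using is_maximal_rdiv_self rdiv_self_mult_rdiv rdiv_self_eq_top by blast
qed

end
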